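(* Let $P=\{x\in\mathbb{R}^n: Ax\le b,\ 0\le x_i\le u_i \text{ for } i\in I\}$ be a rational polyhedron with $I=\{1,\dots,l\}$ and positive integers $u_i$, let $P^I=\{x\in P: x_i\in\mathbb{Z}\text{ for } i\in I\}$, and let $\mathcal{B}=(B^1,\dots,B^l)$ be a binarization scheme in which each $B^i\in\Gamma^{u_i}_{u_i}$ is a unimodular binarization polytope. Then \[\operatorname{proj}_x\big(\mathrm{SC}^q(P_{\mathcal{B}},I_{\mathcal{B}})\big)=\mathrm{conv}(P^I),\qquad\text{where } q=\sum_{i=1}^l\lceil\log_2(u_i+1)\rceil.\]
   Context: For positive integers $q,u$, $\Gamma^q_u$ is the set of rational polytopes $B\subseteq\{(x,z)\in\mathbb{R}\times[0,1]^q:0\le x\le u\}$ with $\operatorname{proj}_x(B\cap(\mathbb{R}\times\{0,1\}^q))=\{0,1,\dots,u\}$. $B$ is perfect if for each $x\in\{0,\dots,u\}$ there is a unique $z\in\{0,1\}^q$ with $(x,z)\in B$, and $B=\mathrm{conv}(B\cap(\mathbb{R}\times\{0,1\}^q))$. A perfect $B\in\Gamma^u_u$, $B=\mathrm{conv}\{(j,w^j):j=0,\dots,u\}$ with $w^j\in\{0,1\}^u$, is unimodular if the matrix with columns $w^j-w^0$ ($j=1,\dots,u$) is integral with determinant $\pm1$. With $p=\sum_iu_i$, $P_{\mathcal{B}}=\{(x,z)\in\mathbb{R}^n\times\mathbb{R}^p: x\in P,\ (x_i,z_i)\in B^i\text{ for } i\in I\}$, $z=(z_1,\dots,z_l)$,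 $z_i\in\mathbb{R}^{u_i}$, and $I_{\mathcal{B}}=\{1,\dots,l,n+1,\dots,n+p\}$. Split closure: for $J\subseteq\{1,\dots,N\}$ and $X\subseteq\mathbb{R}^N$, $\mathrm{SC}(X,J)=\bigcap\mathrm{conv}(X\setminus S)$ over all $S=\{y:\pi_0<\pi^Ty<\pi_0+1\}$ with $\pi\in\mathbb{Z}^N$, $\pi_j=0$ for $j\notin J$, $\pi_0\in\mathbb{Z}$; $\mathrm{SC}^1=\mathrm{SC}$ and $\mathrm{SC}^k(X,J)=\mathrm{SC}(\mathrm{SC}^{k-1}(X,J),J)$. *)

theory Defs
  imports Complex_Main "Jordan_Normal_Form.Determinant"
begin

(* Convention: a point of R^N is a function  y :: nat => real  whose coordinates
   are y 1, ..., y N and which vanishes outside {1..N}. *)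

definition vecs :: "nat \<Rightarrow> (nat \<Rightarrow> real) set" where
  "vecs N = {y. \<forall>j. j \<notin> {1..N} \<longrightarrow> y j = 0}"

definition conv :: "('a \<Rightarrow> real) set \<Rightarrow> ('a \<Rightarrow> real) set" where
  "conv S = {y. \<exists>(k::nat) (c::nat \<Rightarrow> real) v.
      (\<forall>i<k. 0 \<le> c i \<and> v i \<in> S) \<and> (\<Sum>i<k. c i) = 1 \<and>
      y = (\<lambda>j. \<Sum>i<k. c i * v i j)}"

definition split_set :: "(nat \<Rightarrow> int) \<Rightarrow> nat set \<Rightarrow> int \<Rightarrow> (nat \<Rightarrow> real) set" where
  "split_set \<pi> J \<pi>0 = {y. real_of_int \<pi>0 < (\<Sum>j\<in>J. real_of_int (\<pi> j) * y j)
                          \<and> (\<Sum>j\<in>J. real_of_int (\<pi> j) * y j) < real_of_int \<pi>0 + 1}"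

(* split closure SC(X,J): intersection over integral pi supported on J (pi_j = 0 for j not in J,
   so pi^T y = sum over j in J of pi_j y_j) and integral pi0 *)
definition SC :: "(nat \<Rightarrow> real) set \<Rightarrow> nat set \<Rightarrow> (nat \<Rightarrow> real) set" where
  "SC X J = \<Inter> {conv (X - split_set \<pi> J \<pi>0) | \<pi> \<pi>0. \<forall>j. j \<notin> J \<longrightarrow> \<pi> j = 0}"

definition SC_iter :: "nat \<Rightarrow> (nat \<Rightarrow> real) set \<Rightarrow> nat set \<Rightarrow> (nat \<Rightarrow> real) set" where
  "SC_iter k X J = ((\<lambda>Y. SC Y J) ^^ k) X"

(* Binarization polytopes: a point (x,z) in R x R^q is encoded as b :: nat => real with
   b 0 = x, b 1..b q = z, and b j = 0 for j > q. *)
definition bvecs :: "nat \<Rightarrow> (nat \<Rightarrow> real) set" where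
  "bvecs q = {b. \<forall>j>q. b j = 0}"

definition binary_on :: "nat \<Rightarrow> (nat \<Rightarrow> real) set" where
  "binary_on q = {b. \<forall>j\<in>{1..q}. b j \<in> {0, 1}}"

definition rational_polytope :: "nat \<Rightarrow> (nat \<Rightarrow> real) set \<Rightarrow> bool" where
  "rational_polytope q B \<longleftrightarrow> (\<exists>V. finite V \<and> V \<subseteq> bvecs q \<and> (\<forall>v\<in>V. \<forall>j. v j \<in> \<rat>) \<and> B = conv V)"

definition Gamma :: "nat \<Rightarrow> nat \<Rightarrow> (nat \<Rightarrow> real) set set" where
  "Gamma q u = {B. rational_polytope q B \<and>
      B \<subseteq> {b \<in> bvecs q. 0 \<le> b 0 \<and> b 0 \<le> real u \<and> (\<forall>j\<in>{1..q}. 0 \<le> b j \<and> b j \<le> 1)} \<and>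
      (\<lambda>b. b 0) ` (B \<inter> binary_on q) = real ` {0..u}}"

definition perfect :: "nat \<Rightarrow> nat \<Rightarrow> (nat \<Rightarrow> real) set \<Rightarrow> bool" where
  "perfect q u B \<longleftrightarrow> B \<in> Gamma q u \<and>
      (\<forall>x\<in>{0..u}. \<exists>!b. b \<in> B \<and> b \<in> binary_on q \<and> b 0 = real x) \<and>
      B = conv (B \<inter> binary_on q)"

(* unimodular: perfect B in Gamma^u_u with B = conv{(j,w^j) : j = 0..u}, w^j in {0,1}^u, and the
   u x u matrix with columns w^j - w^0 (j = 1..u) has determinant +-1 (it is integral
   automatically, its entries being in {-1,0,1}). Matrix entry (r,c) (0-based) is w^(c+1)_(r+1) - w^0_(r+1). *)
definition unimodular :: "nat \<Rightarrow> (nat \<Rightarrow> real) set \<Rightarrow> bool" where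
  "unimodular u B \<longleftrightarrow> perfect u u B \<and>
     (\<exists>w :: nat \<Rightarrow> nat \<Rightarrow> real.
        (\<forall>j\<le>u. \<forall>k\<in>{1..u}. w j k \<in> {0, 1}) \<and>
        B = conv ((\<lambda>j. (\<lambda>k. if k = 0 then real j else if k \<in> {1..u} then w j k else 0)) ` {0..u}) \<and>
        (let M = mat u u (\<lambda>(r, c). w (c + 1) (r + 1) - w 0 (r + 1)) in
           (\<forall>r<u. \<forall>c<u. M $$ (r, c) \<in> \<int>) \<and> (det M = 1 \<or> det M = -1)))"

definition proj_x :: "nat \<Rightarrow> (nat \<Rightarrow> real) \<Rightarrow> (nat \<Rightarrow> real)" where
  "proj_x n y = (\<lambda>j. if j \<in> {1..n} then y j else 0)"

(* offset: block z_i occupies coordinates off+1 .. off+u_i with off = n + u_1 + ... + u_(i-1) *)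
definition zoff :: "nat \<Rightarrow> (nat \<Rightarrow> nat) \<Rightarrow> nat \<Rightarrow> nat" where
  "zoff n u i = n + (\<Sum>k\<in>{1..<i}. u k)"

(* the point (x_i, z_i) of R x R^{u_i} extracted from y in R^{n+p} *)
definition blk :: "nat \<Rightarrow> (nat \<Rightarrow> nat) \<Rightarrow> nat \<Rightarrow> (nat \<Rightarrow> real) \<Rightarrow> (nat \<Rightarrow> real)" where
  "blk n u i y = (\<lambda>j. if j = 0 then y i else if j \<in> {1..u i} then y (zoff n u i + j) else 0)"

definition polyP :: "nat \<Rightarrow> nat \<Rightarrow> (nat \<Rightarrow> nat \<Rightarrow> real) \<Rightarrow> (nat \<Rightarrow> real) \<Rightarrow> nat \<Rightarrow> (nat \<Rightarrow> nat)
                     \<Rightarrow> (nat \<Rightarrow> real) set" where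
  "polyP n m A b l u = {x \<in> vecs n. (\<forall>r<m. (\<Sum>j=1..n. A r j * x j) \<le> b r) \<and>
                                     (\<forall>i\<in>{1..l}. 0 \<le> x i \<and> x i \<le> real (u i))}"

definition mixed_int :: "(nat \<Rightarrow> real) set \<Rightarrow> nat \<Rightarrow> (nat \<Rightarrow> real) set" where
  "mixed_int P l = {x \<in> P. \<forall>i\<in>{1..l}. x i \<in> \<int>}"

definition PB :: "nat \<Rightarrow> (nat \<Rightarrow> real) set \<Rightarrow> nat \<Rightarrow> (nat \<Rightarrow> nat) \<Rightarrow> (nat \<Rightarrow> (nat \<Rightarrow> real) set)
                  \<Rightarrow> (nat \<Rightarrow> real) set" where
  "PB n P l u B = {y \<in> vecs (n + (\<Sum>i=1..l. u i)). proj_x n y \<in> P \<and>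
                     (\<forall>i\<in>{1..l}. blk n u i y \<in> B i)}"

definition IB :: "nat \<Rightarrow> nat \<Rightarrow> (nat \<Rightarrow> nat) \<Rightarrow> nat set" where
  "IB n l u = {1..l} \<union> {n + 1..n + (\<Sum>i=1..l. u i)}"

end

theory Submission
  imports Defs
begin

text \<open>Unimodularity of B i means that each binary digit of x i is an integral affine function of the
  binary block z i; on B i these functions take values in [0,1], and x i is the sum of 2^k times the
  k-th one. For such a function the split "value \<le> 0 or value \<ge> 1" is valid, and by Balas' argument
  one round of split closure confines all points to convex combinations of points where this digit is
  0 or 1. After one round per digit, q rounds in total, every point is a convex combination of points
  of P with all x i integral. Conversely, the integral points of the extended formulation survive
  every split, and the split closure of a convex set is convex.\<close>

section \<open>Convex hulls\<close>

lemma convI: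
  fixes k :: nat and c :: "nat \<Rightarrow> real" and v :: "nat \<Rightarrow> 'a \<Rightarrow> real"
  assumes "\<forall>i<k. 0 \<le> c i \<and> v i \<in> S" "(\<Sum>i<k. c i) = 1" "y = (\<lambda>j. \<Sum>i<k. c i * v i j)"
  shows "y \<in> conv S"
  using assms unfolding conv_def by blast

lemma convE:
  fixes y :: "'a \<Rightarrow> real"
  assumes "y \<in> conv S"
  obtains k :: nat and c :: "nat \<Rightarrow> real" and v :: "nat \<Rightarrow> 'a \<Rightarrow> real"
  where "\<forall>i<k. 0 \<le> c i \<and> v i \<in> S" "(\<Sum>i<k. c i) = 1" "y = (\<lambda>j. \<Sum>i<k. c i * v i j)"
  using assms unfolding conv_def by blast

lemma conv_mono: "S \<subseteq> T \<Longrightarrow> conv S \<subseteq> conv T"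
  unfolding conv_def by blast

lemma subset_conv: "S \<subseteq> conv S"
proof
  fix y assume "y \<in> S"
  then show "y \<in> conv S"
    by (intro convI[of 1 "\<lambda>_. 1" "\<lambda>_. y"]) auto
qed

lemma sum_lessThan_add:
  fixes f :: "nat \<Rightarrow> 'a::comm_monoid_add"
  shows "(\<Sum>i<k1 + k2. f i) = (\<Sum>i<k1. f i) + (\<Sum>i<k2. f (i + k1))"
  by (induction k2) (simp_all add: add.commute add.left_commute)

lemma conv_convex_combination:
  assumes a: "a \<in> conv S" and b: "b \<in> conv S" and t: "0 \<le> t" "t \<le> 1"
  shows "(\<lambda>j. t * a j + (1 - t) * b j) \<in> conv S"
proof -
  obtain k1 :: nat and c1 v1 where h1: "\<forall>i<k1. 0 \<le> c1 i \<and> v1 i \<in> S" "(\<Sum>i<k1. c1 i) = 1"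
    "a = (\<lambda>j. \<Sum>i<k1. c1 i * v1 i j)" using a by (rule convE)
  obtain k2 :: nat and c2 v2 where h2: "\<forall>i<k2. 0 \<le> c2 i \<and> v2 i \<in> S" "(\<Sum>i<k2. c2 i) = 1"
    "b = (\<lambda>j. \<Sum>i<k2. c2 i * v2 i j)" using b by (rule convE)
  define c where "c i = (if i < k1 then t * c1 i else (1 - t) * c2 (i - k1))" for i
  define v where "v i = (if i < k1 then v1 i else v2 (i - k1))" for i
  show ?thesis
  proof (rule convI[of "k1 + k2" c v])
    show "\<forall>i<k1 + k2. 0 \<le> c i \<and> v i \<in> S"
      using h1(1) h2(1) t by (auto simp: c_def v_def not_less)
    show "(\<Sum>i<k1 + k2. c i) = 1"
      using h1(2) h2(2) by (simp add: sum_lessThan_add c_def sum_distrib_left[symmetric])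
    show "(\<lambda>j. t * a j + (1 - t) * b j) = (\<lambda>j. \<Sum>i<k1 + k2. c i * v i j)"
      by (simp add: h1(3) h2(3) sum_lessThan_add c_def v_def sum_distrib_left mult.assoc)
  qed
qed

lemma conv_conv_subset: "conv (conv S) \<subseteq> conv S"
proof
  have "(\<lambda>j. \<Sum>i<k. c i * v i j) \<in> conv S"
    if "\<forall>i<k. 0 \<le> c i \<and> v i \<in> conv S" "(\<Sum>i<k. c i) = 1" for k :: nat and c v
    using that
  proof (induction k arbitrary: c)
    case 0
    then show ?case by simp
  next
    case (Suc k)
    define s where "s = (\<Sum>i<k. c i)"
    have s: "0 \<le> s" "s \<le> 1" "s + c k = 1"
      using Suc.prems unfolding s_def by (auto intro: sum_nonneg)
    show ?case
    proof (cases "s = 0")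
      case True
      then have "\<forall>i<k. c i = 0"
        using Suc.prems(1) unfolding s_def by (subst (asm) sum_nonneg_eq_0_iff) auto
      then show ?thesis using Suc.prems(1) s True by simp
    next
      case False
      \<comment> \<open>renormalise the first k weights and mix the result with v k\<close>
      have "(\<lambda>j. \<Sum>i<k. c i / s * v i j) \<in> conv S"
        using Suc.IH[of "\<lambda>i. c i / s"] Suc.prems(1) s False
        by (simp add: sum_divide_distrib[symmetric] s_def[symmetric])
      from conv_convex_combination[OF this, of "v k" s] Suc.prems(1) s
      have "(\<lambda>j. s * (\<Sum>i<k. c i / s * v i j) + (1 - s) * v k j) \<in> conv S"
        by simp
      moreover have "s * (\<Sum>i<k. c i / s * v i j) = (\<Sum>i<k. c i * v i j)" for j
        using False by (simp add: sum_distrib_left)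
      moreover have "1 - s = c k" using s by simp
      ultimately show ?thesis by simp
    qed
  qed
  then show "y \<in> conv S" if "y \<in> conv (conv S)" for y
    using that by (auto elim: convE)
qed

section \<open>Affine functions\<close>

definition affine_functional :: "(('a \<Rightarrow> real) \<Rightarrow> real) \<Rightarrow> bool" where
  "affine_functional F \<longleftrightarrow> (\<forall>(k::nat) c v. (\<Sum>i<k. c i) = 1 \<longrightarrow>
     F (\<lambda>j. \<Sum>i<k. c i * v i j) = (\<Sum>i<k. c i * F (v i)))"

definition affine_map :: "(('a \<Rightarrow> real) \<Rightarrow> ('b \<Rightarrow> real)) \<Rightarrow> bool" where
  "affine_map L \<longleftrightarrow> (\<forall>(k::nat) c v. (\<Sum>i<k. c i) = 1 \<longrightarrow>
     L (\<lambda>j. \<Sum>i<k. c i * v i j) = (\<lambda>j. \<Sum>i<k. c i * L (v i) j))"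

lemma affine_functional_linear: "affine_functional (\<lambda>y. (\<Sum>j\<in>K. a j * y j) + e)"
  unfolding affine_functional_def
proof (intro allI impI)
  fix k :: nat and c :: "nat \<Rightarrow> real" and v
  assume c: "(\<Sum>i<k. c i) = 1"
  have "(\<Sum>i<k. c i * ((\<Sum>j\<in>K. a j * v i j) + e))
      = (\<Sum>j\<in>K. \<Sum>i<k. a j * (c i * v i j)) + (\<Sum>i<k. c i) * e"
    by (simp add: distrib_left sum.distrib sum_distrib_left sum_distrib_right
        mult.left_commute sum.swap[of _ K])
  then show "(\<Sum>j\<in>K. a j * (\<Sum>i<k. c i * v i j)) + e = (\<Sum>i<k. c i * ((\<Sum>j\<in>K. a j * v i j) + e))"
    using c by (simp add: sum_distrib_left)
qed

lemma affine_functional_coordinate: "affine_functional (\<lambda>y. y j)"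
  using affine_functional_linear[where K="{j}" and a="\<lambda>_. 1" and e=0] by simp

lemma affine_functional_const: "affine_functional (\<lambda>y. e)"
  using affine_functional_linear[where K="{}" and e=e] by simp

lemma affine_functional_diff:
  "affine_functional F \<Longrightarrow> affine_functional G \<Longrightarrow> affine_functional (\<lambda>y. F y - G y)"
  unfolding affine_functional_def by (simp add: right_diff_distrib sum_subtractf)

lemma affine_functional_weighted_sum:
  assumes "\<And>i. i \<in> I \<Longrightarrow> affine_functional (F i)"
  shows "affine_functional (\<lambda>y. \<Sum>i\<in>I. a i * F i y)"
  unfolding affine_functional_def
proof (intro allI impI)
  fix k :: nat and c :: "nat \<Rightarrow> real" and v
  assume "(\<Sum>t<k. c t) = 1"
  then have "F i (\<lambda>j. \<Sum>t<k. c t * v t j) = (\<Sum>t<k. c t * F i (v t))" if "i \<in> I" for i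
    using assms[OF that] unfolding affine_functional_def by blast
  then show "(\<Sum>i\<in>I. a i * F i (\<lambda>j. \<Sum>t<k. c t * v t j)) = (\<Sum>t<k. c t * (\<Sum>i\<in>I. a i * F i (v t)))"
    by (simp add: sum_distrib_left mult.left_commute sum.swap[of _ I])
qed

lemma affine_functional_conv_le:
  assumes F: "affine_functional F" and y: "y \<in> conv S" and le: "\<forall>v\<in>S. F v \<le> \<beta>"
  shows "F y \<le> \<beta>"
proof -
  obtain k :: nat and c v where h: "\<forall>i<k. 0 \<le> c i \<and> v i \<in> S" "(\<Sum>i<k. c i) = 1"
    "y = (\<lambda>j. \<Sum>i<k. c i * v i j)" using y by (rule convE)
  have "F y = (\<Sum>i<k. c i * F (v i))"
    using F h(2,3) unfolding affine_functional_def by blast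
  also have "\<dots> \<le> (\<Sum>i<k. c i * \<beta>)"
    using h(1) le by (intro sum_mono mult_left_mono) auto
  also have "\<dots> = \<beta>" using h(2) by (simp add: sum_distrib_right[symmetric])
  finally show ?thesis .
qed

lemma affine_functional_conv_ge:
  assumes "affine_functional F" "y \<in> conv S" "\<forall>v\<in>S. \<beta> \<le> F v"
  shows "\<beta> \<le> F y"
  using affine_functional_conv_le[OF affine_functional_diff[OF affine_functional_const[of 0] assms(1)] assms(2),
      of "- \<beta>"] assms(3) by simp

lemma affine_functional_conv_eq:
  assumes "affine_functional F" "y \<in> conv S" "\<forall>v\<in>S. F v = \<beta>"
  shows "F y = \<beta>"
  using affine_functional_conv_le[OF assms(1,2)] affine_functional_conv_ge[OF assms(1,2)] assms(3)
  by (simp add: order.eq_iff)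

lemma conv_face:
  assumes F: "affine_functional F" and y: "y \<in> conv T"
    and nonneg: "\<forall>v\<in>T. 0 \<le> F v" and "F y \<le> 0"
  shows "y \<in> conv {v\<in>T. F v = 0}"
proof -
  obtain k :: nat and c v where h: "\<forall>i<k. 0 \<le> c i \<and> v i \<in> T" "(\<Sum>i<k. c i) = 1"
    "y = (\<lambda>j. \<Sum>i<k. c i * v i j)" using y by (rule convE)
  have "F y = (\<Sum>i<k. c i * F (v i))"
    using F h(2,3) unfolding affine_functional_def by blast
  \<comment> \<open>a vanishing sum of nonnegative terms: every point with positive weight lies on the face\<close>
  then have zero: "c i * F (v i) = 0" if "i < k" for i
    using sum_nonneg_eq_0_iff[of "{..<k}" "\<lambda>i. c i * F (v i)"] h(1) nonneg \<open>F y \<le> 0\<close> that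
      sum_nonneg[of "{..<k}" "\<lambda>i. c i * F (v i)"] by force
  obtain i0 where i0: "i0 < k" "c i0 \<noteq> 0"
  proof -
    have "\<not> (\<forall>i<k. c i = 0)" using h(2) by (metis lessThan_iff sum.neutral zero_neq_one)
    then show ?thesis using that by blast
  qed
  define v' where "v' i = (if c i = 0 then v i0 else v i)" for i
  show ?thesis
  proof (rule convI[of k c v'])
    show "\<forall>i<k. 0 \<le> c i \<and> v' i \<in> {v\<in>T. F v = 0}"
      using h(1) zero i0 by (auto simp: v'_def)
    show "y = (\<lambda>j. \<Sum>i<k. c i * v' i j)"
      unfolding h(3) v'_def by (intro ext sum.cong) auto
  qed (fact h(2))
qed

lemma affine_map_image_conv:
  assumes L: "affine_map L"
  shows "L ` conv S = conv (L ` S)"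
proof
  show "L ` conv S \<subseteq> conv (L ` S)"
  proof
    fix x assume "x \<in> L ` conv S"
    then obtain y where "y \<in> conv S" "x = L y" by blast
    then obtain k :: nat and c v where h: "\<forall>i<k. 0 \<le> c i \<and> v i \<in> S" "(\<Sum>i<k. c i) = 1"
      "x = L (\<lambda>j. \<Sum>i<k. c i * v i j)" by (auto elim: convE)
    show "x \<in> conv (L ` S)"
      by (rule convI[of k c "\<lambda>i. L (v i)"]) (use h L in \<open>auto simp: affine_map_def\<close>)
  qed
  show "conv (L ` S) \<subseteq> L ` conv S"
  proof
    fix x assume "x \<in> conv (L ` S)"
    then obtain k :: nat and c v where h: "\<forall>i<k. 0 \<le> c i \<and> v i \<in> L ` S" "(\<Sum>i<k. c i) = 1"
      "x = (\<lambda>j. \<Sum>i<k. c i * v i j)" by (rule convE)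
    have "\<forall>i<k. \<exists>z. z \<in> S \<and> v i = L z" using h(1) by blast
    then obtain s where s: "\<forall>i<k. s i \<in> S \<and> v i = L (s i)" by metis
    have "(\<lambda>j. \<Sum>i<k. c i * s i j) \<in> conv S"
      by (rule convI[OF _ h(2) refl]) (use h(1) s in auto)
    moreover have "x = L (\<lambda>j. \<Sum>i<k. c i * s i j)"
      using L h(2,3) s unfolding affine_map_def by simp
    ultimately show "x \<in> L ` conv S" by blast
  qed
qed

lemma affine_map_proj_x: "affine_map (proj_x n)"
  unfolding affine_map_def proj_x_def by (auto simp: fun_eq_iff)

lemma affine_map_blk: "affine_map (blk n u i)"
  unfolding affine_map_def blk_def by (auto simp: fun_eq_iff)

section \<open>Split closure\<close>

definition split_form :: "(nat \<Rightarrow> int) \<Rightarrow> int \<Rightarrow> nat set \<Rightarrow> (nat \<Rightarrow> real) \<Rightarrow> real" where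
  "split_form \<pi> \<pi>0 J y = (\<Sum>j\<in>J. real_of_int (\<pi> j) * y j) - real_of_int \<pi>0"

lemma split_set_iff: "y \<in> split_set \<pi> J \<pi>0 \<longleftrightarrow> 0 < split_form \<pi> \<pi>0 J y \<and> split_form \<pi> \<pi>0 J y < 1"
  unfolding split_set_def split_form_def by auto

lemma affine_functional_split_form: "affine_functional (split_form \<pi> \<pi>0 J)"
  using affine_functional_linear[where a="\<lambda>j. real_of_int (\<pi> j)" and K=J and e="- real_of_int \<pi>0"]
  unfolding split_form_def by simp

lemma SC_subset_conv:
  assumes "\<forall>j. j \<notin> J \<longrightarrow> \<pi> j = 0"
  shows "SC Y J \<subseteq> conv (Y - split_set \<pi> J \<pi>0)"
  unfolding SC_def using assms by blast

lemma conv_SC_subset: "conv (SC Y J) \<subseteq> SC Y J"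
proof -
  have "conv (SC Y J) \<subseteq> conv (Y - split_set \<pi> J \<pi>0)" if "\<forall>j. j \<notin> J \<longrightarrow> \<pi> j = 0" for \<pi> \<pi>0
    using conv_mono[OF SC_subset_conv[OF that]] conv_conv_subset by blast
  then show ?thesis unfolding SC_def by blast
qed

lemma integral_points_subset_SC: "{y\<in>Y. \<forall>j\<in>J. y j \<in> \<int>} \<subseteq> SC Y J"
proof -
  have "y \<notin> split_set \<pi> J \<pi>0" if "\<forall>j\<in>J. y j \<in> \<int>" for y \<pi> \<pi>0
  proof -
    have "split_form \<pi> \<pi>0 J y \<in> \<int>"
      using that unfolding split_form_def by (intro Ints_diff Ints_sum Ints_mult) auto
    then obtain z where "split_form \<pi> \<pi>0 J y = real_of_int z" by (auto elim: Ints_cases)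
    then show ?thesis unfolding split_set_iff by auto
  qed
  then show ?thesis unfolding SC_def using subset_conv by blast
qed

lemma SC_iter_0 [simp]: "SC_iter 0 X J = X"
  by (simp add: SC_iter_def)

lemma SC_iter_Suc [simp]: "SC_iter (Suc k) X J = SC (SC_iter k X J) J"
  by (simp add: SC_iter_def)

lemma integral_points_subset_SC_iter: "{y\<in>X. \<forall>j\<in>J. y j \<in> \<int>} \<subseteq> SC_iter k X J"
proof (induction k)
  case (Suc k)
  then show ?case using integral_points_subset_SC[of "SC_iter k X J" J] by auto
qed simp

lemma conv_SC_iter_subset: "conv X \<subseteq> X \<Longrightarrow> conv (SC_iter k X J) \<subseteq> SC_iter k X J"
  by (cases k) (simp_all add: conv_SC_subset)

text \<open>Balas' disjunctive step: by the [0,1] bounds, each side of the split meets conv T in a face.\<close>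

lemma conv_diff_split_set_subset:
  assumes bounds: "\<forall>y\<in>T. 0 \<le> split_form \<pi> \<pi>0 J y \<and> split_form \<pi> \<pi>0 J y \<le> 1"
  shows "conv T - split_set \<pi> J \<pi>0 \<subseteq> conv {y\<in>T. split_form \<pi> \<pi>0 J y \<in> {0, 1}}"
proof
  let ?F = "split_form \<pi> \<pi>0 J"
  fix y assume y: "y \<in> conv T - split_set \<pi> J \<pi>0"
  then have "?F y \<le> 0 \<or> 1 \<le> ?F y" by (auto simp: split_set_iff)
  then show "y \<in> conv {y\<in>T. ?F y \<in> {0, 1}}"
  proof
    assume "?F y \<le> 0"
    then have "y \<in> conv {v\<in>T. ?F v = 0}"
      using y bounds by (intro conv_face affine_functional_split_form) auto
    moreover have "{v\<in>T. ?F v = 0} \<subseteq> {y\<in>T. ?F y \<in> {0, 1}}" by auto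
    ultimately show ?thesis using conv_mono by blast
  next
    assume "1 \<le> ?F y"
    then have "y \<in> conv {v\<in>T. 1 - ?F v = 0}"
      using y bounds
      by (intro conv_face affine_functional_diff affine_functional_const affine_functional_split_form) auto
    moreover have "{v\<in>T. 1 - ?F v = 0} \<subseteq> {y\<in>T. ?F y \<in> {0, 1}}" by auto
    ultimately show ?thesis using conv_mono by blast
  qed
qed

lemma SC_iter_subset_conv_binary_forms:
  fixes \<pi> :: "'i \<Rightarrow> nat \<Rightarrow> int" and \<pi>0 :: "'i \<Rightarrow> int"
  assumes "finite I"
    and "\<forall>i\<in>I. \<forall>j. j \<notin> J \<longrightarrow> \<pi> i j = 0"
    and "\<forall>i\<in>I. \<forall>y\<in>X. 0 \<le> split_form (\<pi> i) (\<pi>0 i) J y \<and> split_form (\<pi> i) (\<pi>0 i) J y \<le> 1"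
  shows "SC_iter (card I) X J \<subseteq> conv {y\<in>X. \<forall>i\<in>I. split_form (\<pi> i) (\<pi>0 i) J y \<in> {0, 1}}"
  using assms
proof (induction I rule: finite_induct)
  case empty
  show ?case using subset_conv by simp
next
  case (insert i I)
  let ?T = "{y\<in>X. \<forall>i\<in>I. split_form (\<pi> i) (\<pi>0 i) J y \<in> {0, 1}}"
  have "SC_iter (card (insert i I)) X J = SC (SC_iter (card I) X J) J"
    using insert.hyps by simp
  also have "\<dots> \<subseteq> conv (SC_iter (card I) X J - split_set (\<pi> i) J (\<pi>0 i))"
    using insert.prems by (intro SC_subset_conv) auto
  also have "\<dots> \<subseteq> conv (conv ?T - split_set (\<pi> i) J (\<pi>0 i))"
    using insert.IH insert.prems by (intro conv_mono Diff_mono) auto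
  also have "\<dots> \<subseteq> conv (conv {y\<in>?T. split_form (\<pi> i) (\<pi>0 i) J y \<in> {0, 1}})"
    using insert.prems by (intro conv_mono conv_diff_split_set_subset) auto
  also have "\<dots> \<subseteq> conv {y\<in>?T. split_form (\<pi> i) (\<pi>0 i) J y \<in> {0, 1}}"
    by (rule conv_conv_subset)
  also have "\<dots> = conv {y\<in>X. \<forall>i'\<in>insert i I. split_form (\<pi> i') (\<pi>0 i') J y \<in> {0, 1}}"
    by (rule arg_cong[where f = conv]) auto
  finally show ?case .
qed

section \<open>Convexity of the formulations\<close>

lemma conv_vecs_subset: "conv (vecs N) \<subseteq> vecs N"
proof
  fix y assume y: "y \<in> conv (vecs N)"
  have "y j = 0" if "j \<notin> {1..N}" for j
    using affine_functional_conv_eq[OF affine_functional_coordinate y, of j 0] that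
    by (simp add: vecs_def)
  then show "y \<in> vecs N" by (simp add: vecs_def)
qed

lemma Gamma_conv_subset: "B \<in> Gamma q u \<Longrightarrow> conv B \<subseteq> B"
  unfolding Gamma_def rational_polytope_def using conv_conv_subset by blast

lemma conv_polyP_subset: "conv (polyP n m A b l u) \<subseteq> polyP n m A b l u"
proof
  fix x assume x: "x \<in> conv (polyP n m A b l u)"
  have "x \<in> vecs n"
    using conv_vecs_subset conv_mono[of "polyP n m A b l u" "vecs n"] x by (auto simp: polyP_def)
  moreover have "(\<Sum>j=1..n. A r j * x j) \<le> b r" if "r < m" for r
    using affine_functional_conv_le[OF affine_functional_linear[where K="{1..n}" and a="A r" and e=0] x]
      that by (simp add: polyP_def)
  moreover have "0 \<le> x i" "x i \<le> real (u i)" if "i \<in> {1..l}" for i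
    using affine_functional_conv_ge[OF affine_functional_coordinate x]
      affine_functional_conv_le[OF affine_functional_coordinate x] that by (auto simp: polyP_def)
  ultimately show "x \<in> polyP n m A b l u" by (simp add: polyP_def)
qed

lemma conv_PB_subset:
  assumes "conv P \<subseteq> P" and "\<forall>i\<in>{1..l}. conv (B i) \<subseteq> B i"
  shows "conv (PB n P l u B) \<subseteq> PB n P l u B"
proof
  let ?X = "PB n P l u B"
  fix y assume y: "y \<in> conv ?X"
  have "y \<in> vecs (n + (\<Sum>i=1..l. u i))"
    using conv_vecs_subset conv_mono[of ?X] y by (auto simp: PB_def)
  moreover have "proj_x n y \<in> conv (proj_x n ` ?X)"
    using y affine_map_image_conv[OF affine_map_proj_x] by blast
  then have "proj_x n y \<in> P"
    using assms(1) conv_mono[of "proj_x n ` ?X" P] by (auto simp: PB_def)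
  moreover have "blk n u i y \<in> B i" if i: "i \<in> {1..l}" for i
  proof -
    have "blk n u i y \<in> conv (blk n u i ` ?X)"
      using y affine_map_image_conv[OF affine_map_blk] by blast
    moreover have "blk n u i ` ?X \<subseteq> B i"
      using i by (auto simp: PB_def)
    ultimately show ?thesis
      using assms(2) i conv_mono by blast
  qed
  ultimately show "y \<in> ?X" by (simp add: PB_def)
qed

section \<open>Unimodular binarizations\<close>

lemma det_Ints:
  fixes A :: "real mat"
  assumes A: "A \<in> carrier_mat n n" and I: "\<forall>i<n. \<forall>j<n. A $$ (i, j) \<in> \<int>"
  shows "det A \<in> \<int>"
  unfolding det_def'[OF A]
proof (intro Ints_sum Ints_mult Ints_prod)
  fix p i assume "p \<in> {p. p permutes {0..<n}}" "i \<in> {0..<n}"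
  then show "A $$ (i, p i) \<in> \<int>" using I permutes_in_image by fastforce
qed simp

lemma adj_mat_Ints:
  fixes A :: "real mat"
  assumes A: "A \<in> carrier_mat n n" and I: "\<forall>i<n. \<forall>j<n. A $$ (i, j) \<in> \<int>"
    and ij: "i < n" "j < n"
  shows "adj_mat A $$ (i, j) \<in> \<int>"
proof -
  have "\<forall>a<n - 1. \<forall>b<n - 1. mat_delete A j i $$ (a, b) \<in> \<int>"
    using A I by (auto simp: mat_delete_def)
  then have "det (mat_delete A j i) \<in> \<int>"
    using det_Ints[OF mat_delete_carrier[OF A]] by blast
  then show ?thesis
    using A ij by (simp add: adj_mat_def cofactor_def)
qed

lemma unimodular_integral_solution:
  fixes M :: "real mat" and \<beta> :: "nat \<Rightarrow> real"
  assumes M: "M \<in> carrier_mat u u" and I: "\<forall>i<u. \<forall>j<u. M $$ (i, j) \<in> \<int>"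
    and D: "det M = 1 \<or> det M = -1" and \<beta>: "\<forall>c<u. \<beta> c \<in> \<int>"
  shows "\<exists>g::nat \<Rightarrow> int. \<forall>c<u. (\<Sum>r<u. real_of_int (g r) * M $$ (r, c)) = \<beta> c"
proof -
  \<comment> \<open>Cramer's rule: the row vector det M * (\<beta>^T adj M) solves g^T M = \<beta>^T, and it is integral\<close>
  define h where "h r = det M * (\<Sum>s<u. \<beta> s * adj_mat M $$ (s, r))" for r
  have "h r \<in> \<int>" if "r < u" for r
    unfolding h_def using D \<beta> adj_mat_Ints[OF M I _ that] by (intro Ints_mult Ints_sum) auto
  then have g: "real_of_int \<lfloor>h r\<rfloor> = h r" if "r < u" for r
    using that by (auto elim: Ints_cases)
  have adj: "(\<Sum>r<u. adj_mat M $$ (s, r) * M $$ (r, c)) = det M * (if s = c then 1 else 0)"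
    if "s < u" "c < u" for s c
  proof -
    have "(adj_mat M * M) $$ (s, c) = (\<Sum>r<u. adj_mat M $$ (s, r) * M $$ (r, c))"
      using adj_mat(1)[OF M] M that by (simp add: scalar_prod_def atLeast0LessThan)
    moreover have "(adj_mat M * M) $$ (s, c) = det M * (if s = c then 1 else 0)"
      unfolding adj_mat(3)[OF M] using that by simp
    ultimately show ?thesis by simp
  qed
  have "(\<Sum>r<u. h r * M $$ (r, c)) = \<beta> c" if c: "c < u" for c
  proof -
    have "(\<Sum>r<u. h r * M $$ (r, c)) = (\<Sum>r<u. \<Sum>s<u. det M * \<beta> s * adj_mat M $$ (s, r) * M $$ (r, c))"
      unfolding h_def by (simp add: sum_distrib_left sum_distrib_right mult.assoc)
    also have "\<dots> = (\<Sum>s<u. \<Sum>r<u. det M * \<beta> s * adj_mat M $$ (s, r) * M $$ (r, c))"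
      by (rule sum.swap)
    also have "\<dots> = det M * (\<Sum>s<u. \<beta> s * (\<Sum>r<u. adj_mat M $$ (s, r) * M $$ (r, c)))"
      by (simp add: sum_distrib_left mult.assoc)
    also have "\<dots> = det M * (\<Sum>s<u. if s = c then det M * \<beta> c else 0)"
      using adj c by (intro arg_cong[where f = "\<lambda>x. det M * x"] sum.cong) auto
    also have "\<dots> = \<beta> c"
      using c D by auto
    finally show ?thesis .
  qed
  moreover have "(\<Sum>r<u. real_of_int \<lfloor>h r\<rfloor> * M $$ (r, c)) = (\<Sum>r<u. h r * M $$ (r, c))" for c
    using g by (intro sum.cong) auto
  ultimately show ?thesis by (intro exI[of _ "\<lambda>r. \<lfloor>h r\<rfloor>"]) simp
qed

lemma sum_binary_digits: "(\<Sum>k<d. 2 ^ k * ((j::nat) div 2 ^ k mod 2)) = j mod 2 ^ d"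
proof (induction d)
  case (Suc d)
  have "j mod 2 ^ Suc d = 2 ^ d * (j div 2 ^ d mod 2) + j mod 2 ^ d"
    using mod_mult2_eq[of j "2 ^ d" 2] by (simp add: mult.commute)
  then show ?case using Suc by simp
qed simp

lemma less_two_power_ceiling_log: "u < 2 ^ nat \<lceil>log 2 (real (u + 1))\<rceil>"
proof -
  define L where "L = log 2 (real (u + 1))"
  have "real (u + 1) = 2 powr L" unfolding L_def by simp
  also have "\<dots> \<le> 2 powr real (nat \<lceil>L\<rceil>)"
    by (intro powr_mono) (auto simp: L_def intro: order.trans[OF le_of_int_ceiling])
  also have "\<dots> = real (2 ^ nat \<lceil>L\<rceil>)"
    by (simp add: powr_realpow)
  finally show ?thesis unfolding L_def by linarith
qed

definition bin_vertex :: "nat \<Rightarrow> (nat \<Rightarrow> nat \<Rightarrow> real) \<Rightarrow> nat \<Rightarrow> nat \<Rightarrow> real" where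
  "bin_vertex u w j = (\<lambda>k. if k = 0 then real j else if k \<in> {1..u} then w j k else 0)"

lemma unimodular_vertex_bit_forms:
  assumes "unimodular u B"
  obtains w g c where "B = conv (bin_vertex u w ` {0..u})"
    and "\<And>k j. j \<le> u \<Longrightarrow> split_form (g k) (c k) {1..u} (bin_vertex u w j) = real (j div 2 ^ k mod 2)"
proof -
  obtain w where w01: "\<forall>j\<le>u. \<forall>k\<in>{1..u}. w j k \<in> {0, 1}"
    and B: "B = conv (bin_vertex u w ` {0..u})"
    and det: "let M = mat u u (\<lambda>(r, c). w (c + 1) (r + 1) - w 0 (r + 1)) in
       (\<forall>r<u. \<forall>c<u. M $$ (r, c) \<in> \<int>) \<and> (det M = 1 \<or> det M = -1)"
    using assms unfolding unimodular_def bin_vertex_def by blast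
  define M where "M = mat u u (\<lambda>(r, c). w (c + 1) (r + 1) - w 0 (r + 1))"
  have M: "M \<in> carrier_mat u u" "\<forall>r<u. \<forall>c<u. M $$ (r, c) \<in> \<int>" "det M = 1 \<or> det M = -1"
    using det by (simp_all add: M_def Let_def)
  \<comment> \<open>unimodularity makes the k-th binary digit of the vertex index an integral linear function of w\<close>
  have "\<exists>h::nat \<Rightarrow> int. \<forall>c<u. (\<Sum>r<u. real_of_int (h r) * M $$ (r, c)) = real ((c + 1) div 2 ^ k mod 2)" for k
    using unimodular_integral_solution[OF M] by simp
  then obtain h :: "nat \<Rightarrow> nat \<Rightarrow> int" where h:
    "\<And>k c. c < u \<Longrightarrow> (\<Sum>r<u. real_of_int (h k r) * M $$ (r, c)) = real ((c + 1) div 2 ^ k mod 2)"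
    by metis
  define g where "g k r = h k (r - 1)" for k r
  define c where "c k = (\<Sum>r<u. h k r * \<lfloor>w 0 (r + 1)\<rfloor>)" for k
  have floor: "real_of_int \<lfloor>w 0 (r + 1)\<rfloor> = w 0 (r + 1)" if "r < u" for r
  proof -
    have "w 0 (r + 1) \<in> {0, 1}" using w01 that by auto
    then show ?thesis by auto
  qed
  have form: "split_form (g k) (c k) {1..u} (bin_vertex u w j)
      = (\<Sum>r<u. real_of_int (h k r) * (w j (r + 1) - w 0 (r + 1)))" if "j \<le> u" for k j
  proof -
    have "(\<Sum>r\<in>{1..u}. real_of_int (g k r) * bin_vertex u w j r) = (\<Sum>r<u. real_of_int (h k r) * w j (r + 1))"
      by (rule sum.reindex_bij_witness[of _ Suc "\<lambda>r. r - 1"]) (auto simp: g_def bin_vertex_def)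
    moreover have "real_of_int (c k) = (\<Sum>r<u. real_of_int (h k r) * w 0 (r + 1))"
      unfolding c_def of_int_sum of_int_mult by (intro sum.cong refl) (metis floor lessThan_iff)
    ultimately show ?thesis
      by (simp add: split_form_def right_diff_distrib sum_subtractf)
  qed
  show thesis
  proof (rule that[OF B])
    fix k j assume j: "j \<le> u"
    show "split_form (g k) (c k) {1..u} (bin_vertex u w j) = real (j div 2 ^ k mod 2)"
    proof (cases j)
      case (Suc i)
      have "(\<Sum>r<u. real_of_int (h k r) * (w j (r + 1) - w 0 (r + 1))) = (\<Sum>r<u. real_of_int (h k r) * M $$ (r, i))"
        using j Suc by (intro sum.cong) (auto simp: M_def)
      then show ?thesis using form[OF j] h[of i k] j Suc by simp
    qed (use form[of 0] in simp)
  qed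
qed

lemma unimodular_bit_forms:
  assumes "unimodular u B"
  obtains g :: "nat \<Rightarrow> nat \<Rightarrow> int" and c :: "nat \<Rightarrow> int"
  where "\<And>k z. z \<in> B \<Longrightarrow> 0 \<le> split_form (g k) (c k) {1..u} z \<and> split_form (g k) (c k) {1..u} z \<le> 1"
    and "\<And>d z. u < 2 ^ d \<Longrightarrow> z \<in> B \<Longrightarrow> z 0 = (\<Sum>k<d. 2 ^ k * split_form (g k) (c k) {1..u} z)"
proof -
  obtain w g c where B: "B = conv (bin_vertex u w ` {0..u})"
    and vertex: "\<And>k j. j \<le> u \<Longrightarrow> split_form (g k) (c k) {1..u} (bin_vertex u w j) = real (j div 2 ^ k mod 2)"
    using unimodular_vertex_bit_forms[OF assms] by blast
  show thesis
  proof (rule that)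
    fix k z assume "z \<in> B"
    then show "0 \<le> split_form (g k) (c k) {1..u} z \<and> split_form (g k) (c k) {1..u} z \<le> 1"
      unfolding B using vertex
      by (intro conjI affine_functional_conv_ge[OF affine_functional_split_form]
          affine_functional_conv_le[OF affine_functional_split_form]) auto
  next
    fix d z assume d: "u < 2 ^ d" and "z \<in> B"
    have "\<forall>v\<in>bin_vertex u w ` {0..u}. v 0 - (\<Sum>k<d. 2 ^ k * split_form (g k) (c k) {1..u} v) = 0"
    proof
      fix v assume "v \<in> bin_vertex u w ` {0..u}"
      then obtain j where j: "j \<le> u" "v = bin_vertex u w j" by auto
      then have "(\<Sum>k<d. 2 ^ k * split_form (g k) (c k) {1..u} v) = (\<Sum>k<d. 2 ^ k * real (j div 2 ^ k mod 2))"
        using vertex by simp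
      also have "\<dots> = real (j mod 2 ^ d)"
        unfolding sum_binary_digits[symmetric] by simp
      finally have "(\<Sum>k<d. 2 ^ k * split_form (g k) (c k) {1..u} v) = real (j mod 2 ^ d)" .
      then show "v 0 - (\<Sum>k<d. 2 ^ k * split_form (g k) (c k) {1..u} v) = 0"
        using j d by (simp add: bin_vertex_def)
    qed
    moreover have "affine_functional (\<lambda>z. z 0 - (\<Sum>k<d. 2 ^ k * split_form (g k) (c k) {1..u} z))"
      by (intro affine_functional_diff affine_functional_coordinate affine_functional_weighted_sum
          affine_functional_split_form)
    ultimately show "z 0 = (\<Sum>k<d. 2 ^ k * split_form (g k) (c k) {1..u} z)"
      using affine_functional_conv_eq \<open>z \<in> B\<close> unfolding B by fastforce
  qed
qed

section \<open>The binarized formulation\<close>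

definition zblock :: "nat \<Rightarrow> (nat \<Rightarrow> nat) \<Rightarrow> nat \<Rightarrow> nat set" where
  "zblock n u i = {zoff n u i + 1..zoff n u i + u i}"

lemma zblock_subset:
  assumes "i \<in> {1..l}"
  shows "zblock n u i \<subseteq> {n + 1..n + (\<Sum>k=1..l. u k)}"
proof -
  have "zoff n u i + u i = n + (\<Sum>k\<in>{1..<Suc i}. u k)"
    using assms by (simp add: zoff_def)
  also have "\<dots> \<le> n + (\<Sum>k=1..l. u k)"
    using assms by (intro add_left_mono sum_mono2) auto
  finally show ?thesis by (auto simp: zblock_def zoff_def)
qed

lemma zblock_disjoint:
  assumes "1 \<le> i" "i < i'"
  shows "zblock n u i \<inter> zblock n u i' = {}"
proof -
  have "zoff n u i' = zoff n u i + (\<Sum>k\<in>{i..<i'}. u k)"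
    using sum.atLeastLessThan_concat[of 1 i i' u] assms by (simp add: zoff_def)
  moreover have "u i \<le> (\<Sum>k\<in>{i..<i'}. u k)"
    using assms by (intro member_le_sum) auto
  ultimately show ?thesis by (auto simp: zblock_def)
qed

lemma sum_zblock_indicator:
  assumes "i \<in> {1..l}" and "j \<in> zblock n u i"
  shows "(\<Sum>i'\<in>{1..l}. if j \<in> zblock n u i' then f i' else 0) = f i"
proof -
  have "j \<notin> zblock n u i'" if "i' \<in> {1..l}" "i' \<noteq> i" for i'
    using zblock_disjoint[of i i' n u] zblock_disjoint[of i' i n u] assms that
    by (cases "i < i'") auto
  then have "(\<Sum>i'\<in>{1..l}. if j \<in> zblock n u i' then f i' else 0) = (\<Sum>i'\<in>{1..l}. if i' = i then f i else 0)"
    using assms(2) by (intro sum.cong) auto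
  then show ?thesis using assms(1) by simp
qed

definition lift_point :: "nat \<Rightarrow> nat \<Rightarrow> (nat \<Rightarrow> nat) \<Rightarrow> (nat \<Rightarrow> real) \<Rightarrow> (nat \<Rightarrow> nat \<Rightarrow> real) \<Rightarrow> nat \<Rightarrow> real"
  where "lift_point n l u x b j = (if j \<le> n then x j
           else \<Sum>i\<in>{1..l}. if j \<in> zblock n u i then b i (j - zoff n u i) else 0)"

lemma lift_point_zblock:
  assumes "i \<in> {1..l}" "r \<in> {1..u i}"
  shows "lift_point n l u x b (zoff n u i + r) = b i r"
proof -
  have "zoff n u i + r \<in> zblock n u i" "\<not> zoff n u i + r \<le> n"
    using assms(2) by (auto simp: zblock_def zoff_def)
  then show ?thesis
    using sum_zblock_indicator[OF assms(1), of "zoff n u i + r" n u "\<lambda>i'. b i' (zoff n u i + r - zoff n u i')"]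
    by (simp add: lift_point_def)
qed

lemma proj_x_lift_point: "x \<in> vecs n \<Longrightarrow> proj_x n (lift_point n l u x b) = x"
  by (auto simp: proj_x_def lift_point_def vecs_def fun_eq_iff)

lemma blk_lift_point:
  assumes "l \<le> n" "i \<in> {1..l}" "b i \<in> bvecs (u i)" "b i 0 = x i"
  shows "blk n u i (lift_point n l u x b) = b i"
  using assms lift_point_zblock[OF assms(2)] by (auto simp: blk_def lift_point_def bvecs_def fun_eq_iff)

lemma lift_point_vecs:
  assumes "x \<in> vecs n"
  shows "lift_point n l u x b \<in> vecs (n + (\<Sum>i=1..l. u i))"
proof -
  have "lift_point n l u x b j = 0" if "j \<notin> {1..n + (\<Sum>i=1..l. u i)}" for j
  proof (cases "j \<le> n")
    case False
    then have "j \<notin> zblock n u i" if "i \<in> {1..l}" for i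
      using zblock_subset[OF that, of n u] \<open>j \<notin> _\<close> by auto
    then show ?thesis using False by (simp add: lift_point_def)
  qed (use assms that in \<open>simp add: lift_point_def vecs_def\<close>)
  then show ?thesis by (simp add: vecs_def)
qed

lemma lift_point_Ints:
  assumes "j \<le> n \<Longrightarrow> x j \<in> \<int>" and "\<forall>i\<in>{1..l}. b i \<in> binary_on (u i)"
  shows "lift_point n l u x b j \<in> \<int>"
proof (cases "j \<le> n")
  case False
  have "b i (j - zoff n u i) \<in> \<int>" if "i \<in> {1..l}" "j \<in> zblock n u i" for i
  proof -
    have "j - zoff n u i \<in> {1..u i}" using that(2) by (auto simp: zblock_def)
    then have "b i (j - zoff n u i) \<in> {0, 1}" using assms(2) that(1) by (simp add: binary_on_def)
    then show ?thesis by auto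
  qed
  then show ?thesis using False by (auto simp: lift_point_def)
qed (use assms in \<open>simp add: lift_point_def\<close>)

lemma mixed_int_subset_proj_integral_PB:
  assumes "l \<le> n" and P: "P \<subseteq> vecs n" and bounds: "\<forall>x\<in>P. \<forall>i\<in>{1..l}. 0 \<le> x i \<and> x i \<le> real (u i)"
    and Gamma: "\<forall>i\<in>{1..l}. B i \<in> Gamma (u i) (u i)"
  shows "mixed_int P l \<subseteq> proj_x n ` {y \<in> PB n P l u B. \<forall>j\<in>IB n l u. y j \<in> \<int>}"
proof
  fix x assume "x \<in> mixed_int P l"
  then have x: "x \<in> P" "\<forall>i\<in>{1..l}. x i \<in> \<int>" by (auto simp: mixed_int_def)
  have "\<exists>z. z \<in> B i \<and> z \<in> binary_on (u i) \<and> z 0 = x i" if i: "i \<in> {1..l}" for i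
  proof -
    from x(2) i have "x i \<in> \<int>" by blast
    then obtain t where t: "x i = real_of_int t" by (rule Ints_cases)
    moreover have "0 \<le> x i" "x i \<le> real (u i)" using bounds x(1) i by auto
    ultimately have "x i = real (nat t)" "nat t \<le> u i" by linarith+
    then have "x i \<in> real ` {0..u i}" by auto
    also have "real ` {0..u i} = (\<lambda>z. z 0) ` (B i \<inter> binary_on (u i))"
      using Gamma i by (simp add: Gamma_def)
    finally show ?thesis by auto
  qed
  then obtain b where b: "\<forall>i\<in>{1..l}. b i \<in> B i \<and> b i \<in> binary_on (u i) \<and> b i 0 = x i"
    by metis
  have "b i \<in> bvecs (u i)" if "i \<in> {1..l}" for i
    using b Gamma that unfolding Gamma_def by blast
  then have "lift_point n l u x b \<in> PB n P l u B"
    using b x(1) P assms(1) lift_point_vecs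
    by (auto simp: PB_def proj_x_lift_point blk_lift_point)
  moreover have "\<forall>j\<in>IB n l u. lift_point n l u x b j \<in> \<int>"
    using x P b by (auto simp: IB_def vecs_def intro!: lift_point_Ints)
  ultimately have "lift_point n l u x b \<in> {y \<in> PB n P l u B. \<forall>j\<in>IB n l u. y j \<in> \<int>}"
    by simp
  moreover have "x = proj_x n (lift_point n l u x b)"
    using x(1) P by (auto intro: proj_x_lift_point[symmetric])
  ultimately show "x \<in> proj_x n ` {y \<in> PB n P l u B. \<forall>j\<in>IB n l u. y j \<in> \<int>}"
    by blast
qed

lemma conv_mixed_int_subset_proj_SC_iter:
  assumes "l \<le> n" and "P \<subseteq> vecs n" and "\<forall>x\<in>P. \<forall>i\<in>{1..l}. 0 \<le> x i \<and> x i \<le> real (u i)"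
    and "conv P \<subseteq> P" and Gamma: "\<forall>i\<in>{1..l}. B i \<in> Gamma (u i) (u i)"
  shows "conv (mixed_int P l) \<subseteq> proj_x n ` SC_iter k (PB n P l u B) (IB n l u)"
proof -
  let ?X = "PB n P l u B"
  have convex: "conv ?X \<subseteq> ?X"
    using assms(4) Gamma Gamma_conv_subset by (intro conv_PB_subset) blast+
  have "conv (mixed_int P l) \<subseteq> conv (proj_x n ` {y \<in> ?X. \<forall>j\<in>IB n l u. y j \<in> \<int>})"
    using mixed_int_subset_proj_integral_PB[OF assms(1-3) Gamma] by (rule conv_mono)
  also have "\<dots> \<subseteq> conv (proj_x n ` SC_iter k ?X (IB n l u))"
    by (intro conv_mono image_mono integral_points_subset_SC_iter)
  also have "\<dots> = proj_x n ` conv (SC_iter k ?X (IB n l u))"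
    by (rule affine_map_image_conv[OF affine_map_proj_x, symmetric])
  also have "\<dots> \<subseteq> proj_x n ` SC_iter k ?X (IB n l u)"
    by (intro image_mono conv_SC_iter_subset convex)
  finally show ?thesis .
qed

definition block_coeffs :: "nat \<Rightarrow> (nat \<Rightarrow> nat) \<Rightarrow> nat \<Rightarrow> (nat \<Rightarrow> int) \<Rightarrow> nat \<Rightarrow> int" where
  "block_coeffs n u i g j = (if j \<in> zblock n u i then g (j - zoff n u i) else 0)"

lemma split_form_block_coeffs:
  assumes "i \<in> {1..l}"
  shows "split_form (block_coeffs n u i g) c (IB n l u) y = split_form g c {1..u i} (blk n u i y)"
proof -
  have "zblock n u i \<subseteq> IB n l u"
    using zblock_subset[OF assms] by (auto simp: IB_def)
  then have "(\<Sum>j\<in>IB n l u. real_of_int (block_coeffs n u i g j) * y j)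
      = (\<Sum>j\<in>zblock n u i. real_of_int (g (j - zoff n u i)) * y j)"
    by (intro sum.mono_neutral_cong_right) (auto simp: IB_def block_coeffs_def)
  also have "\<dots> = (\<Sum>r\<in>{1..u i}. real_of_int (g r) * blk n u i y r)"
    by (rule sum.reindex_bij_witness[of _ "\<lambda>r. zoff n u i + r" "\<lambda>j. j - zoff n u i"])
      (auto simp: zblock_def blk_def)
  finally show ?thesis by (simp add: split_form_def)
qed

lemma proj_SC_iter_subset_conv_mixed_int:
  assumes "l \<le> n" and unimodular: "\<forall>i\<in>{1..l}. unimodular (u i) (B i)"
  shows "proj_x n ` SC_iter (\<Sum>i=1..l. nat \<lceil>log 2 (real (u i + 1))\<rceil>) (PB n P l u B) (IB n l u)
      \<subseteq> conv (mixed_int P l)"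
proof -
  let ?X = "PB n P l u B" and ?J = "IB n l u" and ?d = "\<lambda>i. nat \<lceil>log 2 (real (u i + 1))\<rceil>"
  have "\<forall>i\<in>{1..l}. \<exists>g c.
      (\<forall>k. \<forall>z\<in>B i. 0 \<le> split_form (g k) (c k) {1..u i} z \<and> split_form (g k) (c k) {1..u i} z \<le> 1) \<and>
      (\<forall>z\<in>B i. z 0 = (\<Sum>k<?d i. 2 ^ k * split_form (g k) (c k) {1..u i} z))"
  proof
    fix i assume i: "i \<in> {1..l}"
    with unimodular have "unimodular (u i) (B i)" by blast
    then show "\<exists>g c.
      (\<forall>k. \<forall>z\<in>B i. 0 \<le> split_form (g k) (c k) {1..u i} z \<and> split_form (g k) (c k) {1..u i} z \<le> 1) \<and>
      (\<forall>z\<in>B i. z 0 = (\<Sum>k<?d i. 2 ^ k * split_form (g k) (c k) {1..u i} z))"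
    proof (rule unimodular_bit_forms)
      fix g :: "nat \<Rightarrow> nat \<Rightarrow> int" and c :: "nat \<Rightarrow> int"
      assume "\<And>k z. z \<in> B i \<Longrightarrow> 0 \<le> split_form (g k) (c k) {1..u i} z \<and> split_form (g k) (c k) {1..u i} z \<le> 1"
        and "\<And>d z. u i < 2 ^ d \<Longrightarrow> z \<in> B i \<Longrightarrow> z 0 = (\<Sum>k<d. 2 ^ k * split_form (g k) (c k) {1..u i} z)"
      then show ?thesis using less_two_power_ceiling_log by blast
    qed
  qed
  from bchoice[OF this] obtain g where "\<forall>i\<in>{1..l}. \<exists>c.
      (\<forall>k. \<forall>z\<in>B i. 0 \<le> split_form (g i k) (c k) {1..u i} z \<and> split_form (g i k) (c k) {1..u i} z \<le> 1) \<and>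
      (\<forall>z\<in>B i. z 0 = (\<Sum>k<?d i. 2 ^ k * split_form (g i k) (c k) {1..u i} z))"
    by blast
  from bchoice[OF this] obtain c where
    bounds: "\<forall>i\<in>{1..l}. \<forall>k. \<forall>z\<in>B i.
       0 \<le> split_form (g i k) (c i k) {1..u i} z \<and> split_form (g i k) (c i k) {1..u i} z \<le> 1" and
    digits: "\<forall>i\<in>{1..l}. \<forall>z\<in>B i. z 0 = (\<Sum>k<?d i. 2 ^ k * split_form (g i k) (c i k) {1..u i} z)"
    by blast
  define I where "I = Sigma {1..l} (\<lambda>i. {..<?d i})"
  define \<pi> where "\<pi> = (\<lambda>(i, k). block_coeffs n u i (g i k))"
  define \<pi>0 where "\<pi>0 = (\<lambda>(i, k). c i k)"
  define T where "T = {y\<in>?X. \<forall>ik\<in>I. split_form (\<pi> ik) (\<pi>0 ik) ?J y \<in> {0, 1}}"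
  have form: "split_form (\<pi> (i, k)) (\<pi>0 (i, k)) ?J y = split_form (g i k) (c i k) {1..u i} (blk n u i y)"
    if "i \<in> {1..l}" for i k y
    using split_form_block_coeffs[OF that] by (simp add: \<pi>_def \<pi>0_def)
  have blk: "blk n u i y \<in> B i" if "y \<in> ?X" "i \<in> {1..l}" for i y
    using that by (simp add: PB_def)
  have "SC_iter (card I) ?X ?J \<subseteq> conv T"
    unfolding T_def
  proof (rule SC_iter_subset_conv_binary_forms)
    show "finite I" by (simp add: I_def)
    show "\<forall>ik\<in>I. \<forall>j. j \<notin> ?J \<longrightarrow> \<pi> ik j = 0"
    proof (intro ballI allI impI)
      fix ik j assume "ik \<in> I" "j \<notin> ?J"
      then obtain i k where "ik = (i, k)" "i \<in> {1..l}" by (auto simp: I_def)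
      then show "\<pi> ik j = 0"
        using zblock_subset[of i l n u] \<open>j \<notin> ?J\<close> by (auto simp: \<pi>_def block_coeffs_def IB_def)
    qed
    show "\<forall>ik\<in>I. \<forall>y\<in>?X. 0 \<le> split_form (\<pi> ik) (\<pi>0 ik) ?J y \<and> split_form (\<pi> ik) (\<pi>0 ik) ?J y \<le> 1"
      using form bounds blk by (auto simp: I_def)
  qed
  moreover have "card I = (\<Sum>i=1..l. ?d i)" by (simp add: I_def)
  moreover have "proj_x n ` T \<subseteq> mixed_int P l"
  proof
    fix x assume "x \<in> proj_x n ` T"
    then obtain y where y: "y \<in> ?X" "\<forall>ik\<in>I. split_form (\<pi> ik) (\<pi>0 ik) ?J y \<in> {0, 1}" "x = proj_x n y"
      by (auto simp: T_def)
    have "x i \<in> \<int>" if i: "i \<in> {1..l}" for i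
    proof -
      have "x i = blk n u i y 0" using i assms(1) y(3) by (simp add: proj_x_def blk_def)
      also have "\<dots> = (\<Sum>k<?d i. 2 ^ k * split_form (g i k) (c i k) {1..u i} (blk n u i y))"
        using digits i blk[OF y(1) i] by blast
      also have "\<dots> \<in> \<int>"
      proof (intro Ints_sum Ints_mult)
        fix k assume "k \<in> {..<?d i}"
        then have "(i, k) \<in> I" using i by (simp add: I_def)
        then show "split_form (g i k) (c i k) {1..u i} (blk n u i y) \<in> \<int>"
          using y(2) form[OF i, of k y] by force
      qed simp
      finally show ?thesis .
    qed
    then show "x \<in> mixed_int P l" using y by (simp add: mixed_int_def PB_def)
  qed
  ultimately have "proj_x n ` SC_iter (\<Sum>i=1..l. ?d i) ?X ?J \<subseteq> proj_x n ` conv T"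
    by (simp add: image_mono)
  also have "\<dots> = conv (proj_x n ` T)"
    by (rule affine_map_image_conv[OF affine_map_proj_x])
  also have "\<dots> \<subseteq> conv (mixed_int P l)"
    by (rule conv_mono) fact
  finally show ?thesis .
qed

theorem corollary3:
  fixes n m l :: nat and A :: "nat \<Rightarrow> nat \<Rightarrow> real" and b :: "nat \<Rightarrow> real"
    and u :: "nat \<Rightarrow> nat" and B :: "nat \<Rightarrow> (nat \<Rightarrow> real) set"
  assumes "l \<le> n"
    and "\<forall>r<m. \<forall>j\<in>{1..n}. A r j \<in> \<rat>"
    and "\<forall>r<m. b r \<in> \<rat>"
    and "\<forall>i\<in>{1..l}. 0 < u i"
    and "\<forall>i\<in>{1..l}. B i \<in> Gamma (u i) (u i) \<and> unimodular (u i) (B i)"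
  shows "proj_x n ` SC_iter (\<Sum>i=1..l. nat \<lceil>log 2 (real (u i + 1))\<rceil>) (PB n (polyP n m A b l u) l u B) (IB n l u)
         = conv (mixed_int (polyP n m A b l u) l)"
proof (rule antisym)
  show "proj_x n ` SC_iter (\<Sum>i=1..l. nat \<lceil>log 2 (real (u i + 1))\<rceil>) (PB n (polyP n m A b l u) l u B) (IB n l u)
      \<subseteq> conv (mixed_int (polyP n m A b l u) l)"
    using assms(1,5) by (intro proj_SC_iter_subset_conv_mixed_int) auto
  show "conv (mixed_int (polyP n m A b l u) l)
      \<subseteq> proj_x n ` SC_iter (\<Sum>i=1..l. nat \<lceil>log 2 (real (u i + 1))\<rceil>) (PB n (polyP n m A b l u) l u B) (IB n l u)"
    using assms(1,5) conv_polyP_subset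
    by (intro conv_mixed_int_subset_proj_SC_iter) (auto simp: polyP_def)
qed

end
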